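(* For any real continuous function $f\in C(\Omega)$, if $|Kf-f|_\infty\le 1$ then $\|[\mathcal D,\pi(M_f)]\|\le 1$.
   Context: $\Omega=\{0,1\}^{\mathbb N}$ with the shift $\sigma$; for $a\in\{0,1\}$, $ax=(a,x_1,\dots)$. $\mu$ is the measure of maximal entropy (uniform Bernoulli product measure), $L^2(\mu)$ the Hilbert space of square-integrable functions. $|\cdot|_\infty$ is the supremum norm. Ruelle operator $L\phi(x)=\frac12(\phi(0x)+\phi(1x))$; Koopman operator $K\phi=\phi\circ\sigma$. $M_f$ is multiplication $g\mapsto fg$. On $\mathcal H=L^2(\mu)\times L^2(\mu)$ (norm $|(\phi_1,\phi_2)|^2=|\phi_1|^2+|\phi_2|^2$), $\mathcal D=\begin{pmatrix}0&K\\ L&0\end{pmatrix}$, $\pi(A)=\begin{pmatrix}A&0\\0&A\end{pmatrix}$, $[\mathcal D,\pi(A)]=\mathcal D\pi(A)-\pi(A)\mathcal D$; $\|\cdot\|$ is the operator norm. *)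

theory Defs
  imports "HOL-Probability.Probability"
begin

text \<open>Omega = {0,1}^N, modelled as nat => bool (False = 0, True = 1), carrying the
product topology (Function_Topology) of the discrete space bool.\<close>

type_synonym omega = "nat \<Rightarrow> bool"

definition shift :: "omega \<Rightarrow> omega" where
  "shift x = (\<lambda>n. x (Suc n))"

definition prepend :: "bool \<Rightarrow> omega \<Rightarrow> omega" where
  "prepend a x = (\<lambda>n. case n of 0 \<Rightarrow> a | Suc m \<Rightarrow> x m)"

definition mu :: "omega measure" where
  "mu = PiM UNIV (\<lambda>_::nat. measure_pmf (pmf_of_set (UNIV :: bool set)))"

definition L2 :: "(omega \<Rightarrow> complex) set" where
  "L2 = {\<phi>. \<phi> \<in> borel_measurable mu \<and> integrable mu (\<lambda>x. (cmod (\<phi> x))\<^sup>2)}"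

definition L2norm :: "(omega \<Rightarrow> complex) \<Rightarrow> real" where
  "L2norm \<phi> = sqrt (\<integral>x. (cmod (\<phi> x))\<^sup>2 \<partial>mu)"

definition Ruelle :: "(omega \<Rightarrow> complex) \<Rightarrow> (omega \<Rightarrow> complex)" where
  "Ruelle \<phi> = (\<lambda>x. (\<phi> (prepend False x) + \<phi> (prepend True x)) / 2)"

definition Koopman :: "(omega \<Rightarrow> 'a) \<Rightarrow> (omega \<Rightarrow> 'a)" where
  "Koopman \<phi> = \<phi> \<circ> shift"

definition Mult :: "(omega \<Rightarrow> real) \<Rightarrow> (omega \<Rightarrow> complex) \<Rightarrow> (omega \<Rightarrow> complex)" where
  "Mult f g = (\<lambda>x. complex_of_real (f x) * g x)"

type_synonym hvec = "(omega \<Rightarrow> complex) \<times> (omega \<Rightarrow> complex)"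

definition Hspace :: "hvec set" where
  "Hspace = L2 \<times> L2"

definition Hnorm :: "hvec \<Rightarrow> real" where
  "Hnorm p = sqrt ((L2norm (fst p))\<^sup>2 + (L2norm (snd p))\<^sup>2)"

definition Dirac :: "hvec \<Rightarrow> hvec" where
  "Dirac p = (Koopman (snd p), Ruelle (fst p))"

definition piop :: "((omega \<Rightarrow> complex) \<Rightarrow> (omega \<Rightarrow> complex)) \<Rightarrow> hvec \<Rightarrow> hvec" where
  "piop A p = (A (fst p), A (snd p))"

definition commutator :: "(hvec \<Rightarrow> hvec) \<Rightarrow> (hvec \<Rightarrow> hvec) \<Rightarrow> hvec \<Rightarrow> hvec" where
  "commutator T S p =
     ((\<lambda>x. fst (T (S p)) x - fst (S (T p)) x), (\<lambda>x. snd (T (S p)) x - snd (S (T p)) x))"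

definition opnorm :: "(hvec \<Rightarrow> hvec) \<Rightarrow> real" where
  "opnorm T = Sup {Hnorm (T p) | p. p \<in> Hspace \<and> Hnorm p \<le> 1}"

end

theory Submission
  imports Defs
begin

(*
  Put h = Kf - f; by compactness of Omega the hypothesis gives |h| <= 1 pointwise. Since
  f x = (Kf)(a x), the commutator maps (phi1, phi2) to (h * K phi2, L(-h * phi1)).
  Multiplication by h is an L^2 contraction, K is an L^2 isometry because mu is shift
  invariant, and L is an L^2 contraction because |L phi|^2 <= L |phi|^2 pointwise while
  integrating (g(0x) + g(1x))/2 against mu gives the integral of g.
*)

(* Second countability makes the product sigma-algebra of mu the Borel one, so continuous
   functions on Omega are mu-measurable. *)
instance bool :: second_countable_topology
proof
  show "\<exists>B::bool set set. countable B \<and> open = generate_topology B"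
    by (intro exI[of _ "range (\<lambda>a. {..<a}) \<union> range (\<lambda>a. {a<..})"]) (simp add: open_bool_def)
qed

lemma sets_mu: "sets mu = sets (borel :: omega measure)"
proof -
  have "sets mu = sets (PiM UNIV (\<lambda>_::nat. borel :: bool measure))"
    unfolding mu_def by (intro sets_PiM_cong) (auto simp: sets_borel_eq_count_space)
  also have "\<dots> = sets borel"
    by (rule sets_PiM_equal_borel)
  finally show ?thesis .
qed

lemma borel_measurable_mu_continuous:
  fixes f :: "omega \<Rightarrow> 'a::topological_space"
  assumes "continuous_on UNIV f"
  shows "f \<in> borel_measurable mu"
  using borel_measurable_continuous_onI[OF assms] measurable_cong_sets[OF sets_mu refl] by blast

lemma compact_UNIV_fun:
  assumes "compact (UNIV :: 'b::topological_space set)"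
  shows "compact (UNIV :: ('a \<Rightarrow> 'b) set)"
proof -
  have "compact_space (euclidean :: 'b topology)"
    using assms by (simp add: compact_space_def)
  then have "compact_space (product_topology (\<lambda>_::'a. (euclidean :: 'b topology)) UNIV)"
    by (simp add: compact_space_product_topology)
  then show ?thesis
    by (metis euclidean_product_topology compact_space_def compactin_euclidean_iff topspace_euclidean)
qed

lemma compact_omega: "compact (UNIV :: omega set)"
  by (intro compact_UNIV_fun finite_imp_compact) simp

lemma continuous_on_shift: "continuous_on UNIV shift"
  unfolding shift_def
  by (intro continuous_on_coordinatewise_then_product continuous_on_product_coordinates)

lemma le_SUP_continuous_compact:
  fixes g :: "'a::topological_space \<Rightarrow> real"
  assumes "compact (UNIV :: 'a set)" and "continuous_on UNIV g"
  shows "g y \<le> (SUP x. g x)"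
proof -
  have "bdd_above (range g)"
    using compact_continuous_image[OF assms(2,1)]
    by (simp add: bounded_imp_bdd_above compact_imp_bounded)
  then show ?thesis
    by (intro cSUP_upper) auto
qed

lemma continuous_on_Koopman:
  assumes "continuous_on UNIV f"
  shows "continuous_on UNIV (Koopman f)"
  unfolding Koopman_def o_def using assms continuous_on_shift
  by (intro continuous_on_compose2[of UNIV f UNIV shift]) auto

lemma abs_Koopman_diff_le:
  fixes f :: "omega \<Rightarrow> real"
  assumes "continuous_on UNIV f" and "(SUP x. \<bar>Koopman f x - f x\<bar>) \<le> c"
  shows "\<bar>Koopman f y - f y\<bar> \<le> c"
proof -
  have "continuous_on UNIV (\<lambda>x. \<bar>Koopman f x - f x\<bar>)"
    using continuous_on_Koopman[OF assms(1)] assms(1) by (intro continuous_intros)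
  then have "\<bar>Koopman f y - f y\<bar> \<le> (SUP x. \<bar>Koopman f x - f x\<bar>)"
    by (rule le_SUP_continuous_compact[OF compact_omega])
  with assms(2) show ?thesis
    by linarith
qed

abbreviation coin :: "bool measure" where
  "coin \<equiv> measure_pmf (pmf_of_set UNIV)"

lemma sequence_space_coin: "sequence_space coin"
  unfolding sequence_space_def product_prob_space_def product_prob_space_axioms_def
    product_sigma_finite_def
  by (auto simp: prob_space_measure_pmf prob_space_imp_sigma_finite)

lemma prepend_eq_case_nat: "prepend a x = case_nat a x"
  unfolding prepend_def by (rule ext) (simp split: nat.split)

lemma shift_prepend [simp]: "shift (prepend a x) = x"
  unfolding shift_def prepend_def by simp

lemma nn_integral_mu_prepend:
  assumes h: "h \<in> borel_measurable mu"
  shows "(\<integral>\<^sup>+x. h x \<partial>mu) = (\<integral>\<^sup>+x. (h (prepend False x) + h (prepend True x)) / 2 \<partial>mu)"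
proof -
  interpret S: sequence_space coin
    by (rule sequence_space_coin)
  have mu_S: "mu = S.S"
    unfolding mu_def ..
  have cons_meas: "(\<lambda>(s, \<omega>). case_nat s \<omega>) \<in> coin \<Otimes>\<^sub>M S.S \<rightarrow>\<^sub>M S.S"
    by measurable
  have h_cons: "(\<lambda>x. h (case_nat a x)) \<in> borel_measurable S.S" for a
    using measurable_compose[OF measurable_Pair1' cons_meas, of a] h by (simp add: mu_S)
  have "(\<integral>\<^sup>+x. h x \<partial>mu) = (\<integral>\<^sup>+x. h x \<partial>distr (coin \<Otimes>\<^sub>M S.S) S.S (\<lambda>(s, \<omega>). case_nat s \<omega>))"
    by (simp add: S.PiM_iter mu_S)
  also have "\<dots> = (\<integral>\<^sup>+x. h (case_prod case_nat x) \<partial>(coin \<Otimes>\<^sub>M S.S))"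
    using h by (intro nn_integral_distr[OF cons_meas]) (simp add: mu_S)
  also have "\<dots> = (\<integral>\<^sup>+s. \<integral>\<^sup>+\<omega>. h (case_nat s \<omega>) \<partial>S.S \<partial>coin)"
    using h cons_meas
    by (subst S.nn_integral_fst[symmetric]) (auto intro: measurable_compose simp: mu_S)
  also have "\<dots> = ((\<integral>\<^sup>+\<omega>. h (case_nat False \<omega>) \<partial>S.S) + (\<integral>\<^sup>+\<omega>. h (case_nat True \<omega>) \<partial>S.S)) / 2"
    by (simp add: nn_integral_pmf_of_set UNIV_bool add.commute)
  also have "\<dots> = (\<integral>\<^sup>+x. (h (prepend False x) + h (prepend True x)) / 2 \<partial>mu)"
    unfolding mu_S prepend_eq_case_nat divide_ennreal_def
    by (subst nn_integral_multc) (auto simp: nn_integral_add h_cons intro!: borel_measurable_add)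
  finally show ?thesis .
qed

lemma measurable_shift: "shift \<in> mu \<rightarrow>\<^sub>M mu"
  unfolding shift_def mu_def by (rule measurable_PiM_single') (auto simp: space_PiM)

lemma nn_integral_mu_shift:
  assumes h: "h \<in> borel_measurable mu"
  shows "(\<integral>\<^sup>+x. h (shift x) \<partial>mu) = (\<integral>\<^sup>+x. h x \<partial>mu)"
proof -
  have "((a::ennreal) + a) / 2 = a" for a
    by (simp add: mult_2_right[symmetric] mult_divide_eq_ennreal)
  then show ?thesis
    using nn_integral_mu_prepend[OF measurable_compose[OF measurable_shift h]] by simp
qed

(* Unlike L2norm, which is 0 off L2, this needs no integrability, so contraction estimates
   can be chained without proving that the intermediate functions lie in L2. *)
definition L2sq :: "(omega \<Rightarrow> complex) \<Rightarrow> ennreal" where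
  "L2sq \<phi> = (\<integral>\<^sup>+x. ennreal ((cmod (\<phi> x))\<^sup>2) \<partial>mu)"

lemma L2sq_eq_L2norm:
  assumes "integrable mu (\<lambda>x. (cmod (\<phi> x))\<^sup>2)"
  shows "L2sq \<phi> = ennreal ((L2norm \<phi>)\<^sup>2)"
  using assms unfolding L2sq_def L2norm_def by (simp add: nn_integral_eq_integral integral_nonneg)

lemma L2norm_le_if_L2sq_le:
  assumes "\<phi> \<in> L2" and "L2sq \<psi> \<le> L2sq \<phi>"
  shows "L2norm \<psi> \<le> L2norm \<phi>"
proof (cases "integrable mu (\<lambda>x. (cmod (\<psi> x))\<^sup>2)")
  case True
  then have "(L2norm \<psi>)\<^sup>2 \<le> (L2norm \<phi>)\<^sup>2"
    using assms L2sq_eq_L2norm[of \<phi>] L2sq_eq_L2norm[of \<psi>] by (simp add: L2_def)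
  then show ?thesis
    by (simp add: L2norm_def power2_le_iff_abs_le)
next
  case False
  then show ?thesis
    by (simp add: L2norm_def not_integrable_integral_eq)
qed

lemma L2sq_Mult_le:
  assumes "\<And>x. \<bar>g x\<bar> \<le> 1"
  shows "L2sq (Mult g \<phi>) \<le> L2sq \<phi>"
  unfolding L2sq_def Mult_def
proof (intro nn_integral_mono ennreal_leI power_mono)
  show "cmod (complex_of_real (g x) * \<phi> x) \<le> cmod (\<phi> x)" for x
    using assms[of x] by (simp add: norm_mult mult_left_le_one_le)
qed simp

lemma L2sq_Koopman:
  assumes "\<phi> \<in> borel_measurable mu"
  shows "L2sq (Koopman \<phi>) = L2sq \<phi>"
  unfolding L2sq_def Koopman_def o_def using assms
  by (intro nn_integral_mu_shift) measurable

lemma norm_midpoint_sq_le: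
  fixes u v :: "'a::real_normed_field"
  shows "(norm ((u + v) / 2))\<^sup>2 \<le> ((norm u)\<^sup>2 + (norm v)\<^sup>2) / 2"
proof -
  have "norm ((u + v) / 2) \<le> (norm u + norm v) / 2"
    using norm_triangle_ineq[of u v] by (simp add: norm_divide)
  then have "(norm ((u + v) / 2))\<^sup>2 \<le> ((norm u + norm v) / 2)\<^sup>2"
    by (rule power_mono) simp
  also have "\<dots> = ((norm u)\<^sup>2 + (norm v)\<^sup>2) / 2 - ((norm u - norm v) / 2)\<^sup>2"
    by (simp add: power2_eq_square field_simps)
  finally show ?thesis
    using zero_le_power2[of "(norm u - norm v) / 2"] by linarith
qed

lemma L2sq_Ruelle_le:
  assumes "\<phi> \<in> borel_measurable mu"
  shows "L2sq (Ruelle \<phi>) \<le> L2sq \<phi>"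
proof -
  have midpoint: "ennreal ((cmod ((u + v) / 2))\<^sup>2) \<le> (ennreal ((cmod u)\<^sup>2) + ennreal ((cmod v)\<^sup>2)) / 2"
    for u v :: complex
  proof -
    have "ennreal ((cmod ((u + v) / 2))\<^sup>2) \<le> ennreal (((cmod u)\<^sup>2 + (cmod v)\<^sup>2) / 2)"
      by (intro ennreal_leI norm_midpoint_sq_le)
    also have "\<dots> = (ennreal ((cmod u)\<^sup>2) + ennreal ((cmod v)\<^sup>2)) / 2"
      by (simp add: ennreal_plus[symmetric] divide_ennreal[symmetric] del: ennreal_plus)
    finally show ?thesis .
  qed
  have "L2sq (Ruelle \<phi>) \<le>
      (\<integral>\<^sup>+x. (ennreal ((cmod (\<phi> (prepend False x)))\<^sup>2) + ennreal ((cmod (\<phi> (prepend True x)))\<^sup>2)) / 2 \<partial>mu)"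
    unfolding L2sq_def Ruelle_def
    by (intro nn_integral_mono midpoint)
  also have "\<dots> = L2sq \<phi>"
    unfolding L2sq_def using assms by (intro nn_integral_mu_prepend[symmetric]) measurable
  finally show ?thesis .
qed

lemma L2sq_Mult_Koopman_le:
  assumes "\<And>x. \<bar>g x\<bar> \<le> 1" and "\<phi> \<in> borel_measurable mu"
  shows "L2sq (Mult g (Koopman \<phi>)) \<le> L2sq \<phi>"
proof -
  have "L2sq (Mult g (Koopman \<phi>)) \<le> L2sq (Koopman \<phi>)"
    using assms(1) by (rule L2sq_Mult_le)
  also have "\<dots> = L2sq \<phi>"
    using assms(2) by (rule L2sq_Koopman)
  finally show ?thesis .
qed

lemma L2sq_Ruelle_Mult_le:
  assumes "\<And>x. \<bar>g x\<bar> \<le> 1" and "g \<in> borel_measurable mu" and "\<phi> \<in> borel_measurable mu"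
  shows "L2sq (Ruelle (Mult g \<phi>)) \<le> L2sq \<phi>"
proof -
  have "Mult g \<phi> \<in> borel_measurable mu"
    unfolding Mult_def using assms(2,3)
    by (intro borel_measurable_times measurable_compose[OF _ borel_measurable_of_real])
  then have "L2sq (Ruelle (Mult g \<phi>)) \<le> L2sq (Mult g \<phi>)"
    by (rule L2sq_Ruelle_le)
  also have "\<dots> \<le> L2sq \<phi>"
    using assms(1) by (rule L2sq_Mult_le)
  finally show ?thesis .
qed

(* The Ruelle part simplifies because f x = Koopman f (prepend a x). *)
lemma commutator_Dirac_Mult:
  "commutator Dirac (piop (Mult f)) p =
     (Mult (\<lambda>x. Koopman f x - f x) (Koopman (snd p)),
      Ruelle (Mult (\<lambda>x. f x - Koopman f x) (fst p)))"
  by (auto simp: commutator_def Dirac_def piop_def Mult_def Ruelle_def Koopman_def field_simps)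

lemma Hnorm_mono:
  assumes "L2norm \<phi>\<^sub>1 \<le> L2norm \<psi>\<^sub>1" and "L2norm \<phi>\<^sub>2 \<le> L2norm \<psi>\<^sub>2"
  shows "Hnorm (\<phi>\<^sub>1, \<phi>\<^sub>2) \<le> Hnorm (\<psi>\<^sub>1, \<psi>\<^sub>2)"
proof -
  have "0 \<le> L2norm \<phi>" for \<phi>
    by (simp add: L2norm_def)
  then show ?thesis
    using assms unfolding Hnorm_def by (intro real_sqrt_le_mono add_mono power_mono) auto
qed

lemma Hnorm_swap: "Hnorm (\<phi>\<^sub>2, \<phi>\<^sub>1) = Hnorm (\<phi>\<^sub>1, \<phi>\<^sub>2)"
  by (simp add: Hnorm_def add.commute)

lemma opnorm_le:
  assumes "0 \<le> c" and "\<And>p. p \<in> Hspace \<Longrightarrow> Hnorm (T p) \<le> c * Hnorm p"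
  shows "opnorm T \<le> c"
  unfolding opnorm_def
proof (rule cSup_least)
  have "(\<lambda>_. 0, \<lambda>_. 0) \<in> Hspace \<and> Hnorm (\<lambda>_. 0, \<lambda>_. 0) \<le> 1"
    by (simp add: Hspace_def L2_def Hnorm_def L2norm_def)
  then show "{Hnorm (T p) |p. p \<in> Hspace \<and> Hnorm p \<le> 1} \<noteq> {}"
    by blast
next
  fix r assume "r \<in> {Hnorm (T p) |p. p \<in> Hspace \<and> Hnorm p \<le> 1}"
  then obtain p where "p \<in> Hspace" "Hnorm p \<le> 1" "r = Hnorm (T p)"
    by blast
  then have "r \<le> c * Hnorm p"
    using assms(2) by simp
  also have "\<dots> \<le> c"
    using \<open>Hnorm p \<le> 1\<close> assms(1) by (rule mult_left_le)
  finally show "r \<le> c" .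
qed

theorem corollary2p17:
  fixes f :: "omega \<Rightarrow> real"
  assumes "continuous_on UNIV f"
    and "(SUP x. \<bar>Koopman f x - f x\<bar>) \<le> 1"
  shows "opnorm (commutator Dirac (piop (Mult f))) \<le> 1"
proof (rule opnorm_le)
  have h_le: "\<bar>Koopman f x - f x\<bar> \<le> 1" "\<bar>f x - Koopman f x\<bar> \<le> 1" for x
    using abs_Koopman_diff_le[OF assms] by (auto simp: abs_minus_commute)
  have f_meas: "f \<in> borel_measurable mu" "Koopman f \<in> borel_measurable mu"
    using assms(1) by (auto intro: borel_measurable_mu_continuous continuous_on_Koopman)
  fix p assume "p \<in> Hspace"
  then obtain \<phi>\<^sub>1 \<phi>\<^sub>2 where p: "p = (\<phi>\<^sub>1, \<phi>\<^sub>2)" "\<phi>\<^sub>1 \<in> L2" "\<phi>\<^sub>2 \<in> L2"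
    and \<phi>_meas: "\<phi>\<^sub>1 \<in> borel_measurable mu" "\<phi>\<^sub>2 \<in> borel_measurable mu"
    by (auto simp: Hspace_def L2_def)
  have "L2sq (Mult (\<lambda>x. Koopman f x - f x) (Koopman \<phi>\<^sub>2)) \<le> L2sq \<phi>\<^sub>2"
    using h_le(1) \<phi>_meas(2) by (rule L2sq_Mult_Koopman_le)
  moreover have "L2sq (Ruelle (Mult (\<lambda>x. f x - Koopman f x) \<phi>\<^sub>1)) \<le> L2sq \<phi>\<^sub>1"
    using h_le(2) f_meas \<phi>_meas(1) by (intro L2sq_Ruelle_Mult_le borel_measurable_diff)
  ultimately show "Hnorm (commutator Dirac (piop (Mult f)) p) \<le> 1 * Hnorm p"
    using p by (simp add: commutator_Dirac_Mult Hnorm_swap[of \<phi>\<^sub>1] Hnorm_mono L2norm_le_if_L2sq_le)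
qed simp

end
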